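(* Let $C\in\mathbb R^3$ be a unit vector and $\Delta=\{(x\cdot y,\ x\cdot C,\ y\cdot C): x,y\in\mathbb S^2\}\subset\mathbb R^3$. For any two distinct points $v,w$ of $V=\{(1,1,1),(1,-1,-1),(-1,1,-1),(-1,-1,1)\}$, the closed line segment from $v$ to $w$ is contained in the boundary $\partial\Delta$. In particular $\partial\Delta$ contains the $1$-skeleton of the regular tetrahedron with vertex set $V$.
   Context: $\mathbb S^2$ is the unit sphere in $\mathbb R^3$ and $\cdot$ is the Euclidean inner product. *)

theory Defs
  imports "HOL-Analysis.Analysis"
begin

definition S2 :: "(real^3) set" where
  "S2 = sphere 0 1"

definition Delta :: "real^3 \<Rightarrow> (real^3) set" where
  "Delta C = {vector [x \<bullet> y, x \<bullet> C, y \<bullet> C] | x y. x \<in> S2 \<and> y \<in> S2}"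

definition tetV :: "(real^3) set" where
  "tetV = {vector [1, 1, 1], vector [1, -1, -1], vector [-1, 1, -1], vector [-1, -1, 1]}"

end

theory Submission
  imports Defs
begin

text \<open>By Cauchy--Schwarz every coordinate of a point of \<open>\<Delta>\<close> lies in \<open>[-1, 1]\<close>, so
  \<open>\<Delta>\<close> sits inside the cube \<open>[-1, 1]\<^sup>3\<close> and each of its points with a coordinate \<open>\<plusminus>1\<close> is a
  boundary point. The closed edges of the tetrahedron are exactly the segments
  \<open>(1,t,t), (t,1,t), (t,t,1), (t,-t,-1), (t,-1,-t), (-1,t,-t)\<close> with \<open>|t| \<le> 1\<close>, and each such
  point lies in \<open>\<Delta>\<close>: take a unit vector \<open>x\<close> with \<open>x \<bullet> C = \<plusminus>t\<close> (it exists because the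
  sphere is connected) and pair it with \<open>x\<close>, \<open>-x\<close>, \<open>C\<close> or \<open>-C\<close>.\<close>

lemma exists_unit_vector_inner_eq:
  fixes C :: "'a::euclidean_space"
  assumes "2 \<le> DIM('a)" "norm C = 1" "\<bar>t\<bar> \<le> 1"
  shows "\<exists>x. norm x = 1 \<and> x \<bullet> C = t"
proof -
  let ?I = "(\<lambda>x. x \<bullet> C) ` sphere 0 1"
  have "connected ?I"
    using assms(1) by (intro connected_continuous_image connected_sphere) (auto intro: continuous_intros)
  moreover have "C \<bullet> C = 1" using assms(2) by (simp add: dot_square_norm)
  then have "1 \<in> ?I" "-1 \<in> ?I"
    using assms(2) by (auto intro!: image_eqI[of _ _ C] image_eqI[of _ _ "-C"])
  ultimately have "t \<in> ?I"
    using assms(3) connected_iff_interval[of ?I] by (metis abs_le_iff minus_le_iff)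
  then show ?thesis by auto
qed

lemma frontier_if_extreme_component:
  fixes S :: "(real^'n) set"
  assumes "p \<in> S" "\<And>q. q \<in> S \<Longrightarrow> \<bar>q $ k\<bar> \<le> r" "\<bar>p $ k\<bar> = r"
  shows "p \<in> frontier S"
proof -
  have "p \<notin> interior S"
  proof (cases "p $ k = r")
    case True
    have "interior S \<subseteq> interior {x. x $ k \<le> r}"
      using assms(2) by (intro interior_mono) (auto simp: abs_le_iff)
    then show ?thesis using True by auto
  next
    case False
    then have "p $ k = - r" using assms(3) by auto
    have "interior S \<subseteq> interior {x. x $ k \<ge> - r}"
      using assms(2) by (intro interior_mono subsetI) (fastforce simp: abs_le_iff)
    then show ?thesis using \<open>p $ k = - r\<close> by auto
  qed
  then show ?thesis using assms(1) closure_subset unfolding frontier_def by auto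
qed

lemma S2_inner_bound: "x \<in> S2 \<Longrightarrow> y \<in> S2 \<Longrightarrow> \<bar>x \<bullet> y\<bar> \<le> 1"
  unfolding S2_def using Cauchy_Schwarz_ineq2[of x y] by auto

lemma Delta_memI: "x \<in> S2 \<Longrightarrow> y \<in> S2 \<Longrightarrow> vector [x \<bullet> y, x \<bullet> C, y \<bullet> C] \<in> Delta C"
  unfolding Delta_def by blast

lemma Delta_component_bound:
  assumes "norm C = 1" "p \<in> Delta C"
  shows "\<bar>p $ k\<bar> \<le> 1"
proof -
  obtain x y where "x \<in> S2" "y \<in> S2" "p = vector [x \<bullet> y, x \<bullet> C, y \<bullet> C]"
    using assms(2) unfolding Delta_def by auto
  moreover have "C \<in> S2" using assms(1) unfolding S2_def by simp
  ultimately show ?thesis using exhaust_3[of k] by (auto intro: S2_inner_bound)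
qed

lemma Delta_edge_points:
  assumes "norm C = 1" "\<bar>t\<bar> \<le> 1"
  shows "{vector [1, t, t], vector [t, 1, t], vector [t, t, 1],
          vector [t, -t, -1], vector [t, -1, -t], vector [-1, t, -t]} \<subseteq> Delta C"
proof -
  have C: "C \<in> S2" "-C \<in> S2" "C \<bullet> C = 1"
    using assms(1) by (auto simp: S2_def dot_square_norm)
  have "\<exists>x. norm x = 1 \<and> x \<bullet> C = s" if "\<bar>s\<bar> \<le> 1" for s
    using exists_unit_vector_inner_eq[of C s] assms(1) that by simp
  then obtain x y where x: "x \<in> S2" "x \<bullet> C = t" and y: "y \<in> S2" "y \<bullet> C = -t"
    using assms(2) unfolding S2_def by (metis abs_minus_cancel mem_sphere_0)
  have xx: "x \<bullet> x = 1" "-x \<in> S2" using x(1) by (auto simp: S2_def dot_square_norm)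
  show ?thesis
    using Delta_memI[OF x(1) x(1), of C] Delta_memI[OF C(1) x(1), of C]
      Delta_memI[OF x(1) C(1), of C] Delta_memI[OF y(1) C(2), of C]
      Delta_memI[OF C(2) y(1), of C] Delta_memI[OF x(1) xx(2), of C]
    by (simp add: x y xx C inner_commute[of C x] inner_commute[of C y])
qed

lemma closed_segment_tetV_cases:
  assumes "v \<in> tetV" "w \<in> tetV" "v \<noteq> w" "p \<in> closed_segment v w"
  obtains t where "\<bar>t\<bar> \<le> 1" "p \<in> {vector [1, t, t], vector [t, 1, t], vector [t, t, 1],
          vector [t, -t, -1], vector [t, -1, -t], vector [-1, t, -t]}"
proof -
  obtain u where u: "0 \<le> u" "u \<le> 1" "p = (1 - u) *\<^sub>R v + u *\<^sub>R w"
    using assms(4) unfolding closed_segment_def by auto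
  show thesis
    using assms(1-3) u unfolding tetV_def
    by (auto simp: vec_eq_iff forall_3 intro: that[of "1 - 2 * u"] that[of "2 * u - 1"])
qed

theorem mainTheorem7:
  fixes C :: "real^3"
  assumes "norm C = 1"
  shows "\<forall>v\<in>tetV. \<forall>w\<in>tetV. v \<noteq> w \<longrightarrow> closed_segment v w \<subseteq> frontier (Delta C)"
proof (intro ballI impI subsetI)
  fix v w p
  assume "v \<in> tetV" "w \<in> tetV" "v \<noteq> w" "p \<in> closed_segment v w"
  then obtain t where t: "\<bar>t\<bar> \<le> 1" "p \<in> {vector [1, t, t], vector [t, 1, t], vector [t, t, 1],
      vector [t, -t, -1], vector [t, -1, -t], vector [-1, t, -t]}"
    by (rule closed_segment_tetV_cases)
  have "p \<in> Delta C" using Delta_edge_points[OF assms t(1)] t(2) by blast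
  moreover have "\<exists>k. \<bar>p $ k\<bar> = 1" using t(2) by (auto intro: exI[of _ 1] exI[of _ 2] exI[of _ 3])
  ultimately show "p \<in> frontier (Delta C)"
    using frontier_if_extreme_component Delta_component_bound[OF assms] by metis
qed

end
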